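(* Fix a countable base $\mathcal{B}$ for the topology of $\mathbb{R}$. Let $\sigma$ be a strategy for \textsc{Bob} in $\mathsf{BM}_\mathrm{fin}(\mathbb{R})$, let $X\subseteq\mathbb{R}$ be a countable set and let $\mathcal{Y}$ be a countable family of nowhere dense subsets of $\mathbb{R}$. Then there exists a sequence $s=\langle\mathcal{A}_n:n\in\omega\rangle$ of finite collections of members of $\mathcal{B}$ (moves of \textsc{Alice}, compatible with $\sigma$) such that $\sigma*s$ is a closed nowhere dense subset of $\mathbb{R}$ disjoint from $X\cup\bigcup\mathcal{Y}$.
   Context: The game $\mathsf{BM}_\mathrm{fin}(\mathbb{R})$: \textsc{Alice} plays a non-empty open set $A_0$ (write $\mathcal{A}_0=\{A_0\}$); \textsc{Bob} plays a finite collection $\mathcal{B}_0$ of non-empty open subsets of $A_0$; in inning $n+1$, for each $B \in \mathcal{B}_n$ \textsc{Alice} plays a non-empty open set $A_B \subseteq B$, letting $\mathcal{A}_{n+1}=\{A_B : B\in\mathcal{B}_n\}$, and \textsc{Bob} plays a finite collection $\mathcal{B}_{n+1}$ of non-empty open subsets of $\bigcup\mathcal{A}_{n+1}$; \textsc{Bob} wins if $\bigcap_{n}\bigcup\mathcal{B}_n\neq\emptyset$. A strategy $\sigma$ for \textsc{Bob} assigns to each finite sequence $\langle\mathcal{A}_0,\dots,\mathcal{A}_n\rangle$ of \textsc{Alice}'s moves his answer $\sigma(\langle\mathcal{A}_0,\dots,\mathcal{A}_n\rangle)$. For such $\sigma$ and a sequence $s=\langle\mathcal{A}_n:n\in\omega\rangle$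 of \textsc{Alice}'s moves compatible with $\sigma$ (i.e. forming a legal play against $\sigma$), $\sigma*s=\bigcap_{n\in\omega}\bigcup\sigma(\langle\mathcal{A}_0,\dots,\mathcal{A}_n\rangle)$. *)

theory Defs
  imports "HOL-Analysis.Analysis"
begin

definition nowhere_dense :: "real set \<Rightarrow> bool" where
  "nowhere_dense S \<longleftrightarrow> interior (closure S) = {}"

definition alice_answer :: "real set set \<Rightarrow> real set set \<Rightarrow> bool" where
  "alice_answer Bs As \<longleftrightarrow>
     (\<exists>f. (\<forall>B\<in>Bs. open (f B) \<and> f B \<noteq> {} \<and> f B \<subseteq> B) \<and> As = f ` Bs)"

definition legal_pos :: "(real set set list \<Rightarrow> real set set) \<Rightarrow> real set set list \<Rightarrow> bool" where
  "legal_pos \<sigma> ps \<longleftrightarrow> ps \<noteq> [] \<and>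
     (\<exists>A0. open A0 \<and> A0 \<noteq> {} \<and> ps ! 0 = {A0}) \<and>
     (\<forall>k. Suc k < length ps \<longrightarrow> alice_answer (\<sigma> (take (Suc k) ps)) (ps ! Suc k))"

definition bob_strategy :: "(real set set list \<Rightarrow> real set set) \<Rightarrow> bool" where
  "bob_strategy \<sigma> \<longleftrightarrow> (\<forall>ps. legal_pos \<sigma> ps \<longrightarrow>
     finite (\<sigma> ps) \<and> (\<forall>B\<in>\<sigma> ps. open B \<and> B \<noteq> {} \<and> B \<subseteq> \<Union>(last ps)))"

definition compatible :: "(real set set list \<Rightarrow> real set set) \<Rightarrow> (nat \<Rightarrow> real set set) \<Rightarrow> bool" where
  "compatible \<sigma> s \<longleftrightarrow> (\<forall>n. legal_pos \<sigma> (map s [0..<Suc n]))"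

definition outcome :: "(real set set list \<Rightarrow> real set set) \<Rightarrow> (nat \<Rightarrow> real set set) \<Rightarrow> real set" where
  "outcome \<sigma> s = (\<Inter>n. \<Union>(\<sigma> (map s [0..<Suc n])))"

end

theory Submission
  imports Defs
begin

text \<open>Enumerate the closures of the members of \<open>\<Y>\<close> and the singletons of
  \<open>X \<union> \<rat>\<close> as \<open>C\<^sub>0, C\<^sub>1, \<dots>\<close>; each is closed with empty interior.  In inning
  \<open>n + 1\<close> Alice shrinks every set \<open>B\<close> of Bob's to a basic open set whose closure
  lies in \<open>B - C\<^sub>n\<close>.  Then the closure of Bob's next union lies inside his previous
  union minus \<open>C\<^sub>n\<close>, so the outcome is an intersection of closed sets that misses
  every \<open>C\<^sub>n\<close>; missing \<open>\<rat>\<close>, it has empty interior.\<close>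

primrec alice_play ::
  "real set \<Rightarrow> (nat \<Rightarrow> real set \<Rightarrow> real set) \<Rightarrow> (real set set list \<Rightarrow> real set set) \<Rightarrow> nat \<Rightarrow> real set set list"
where
  "alice_play A0 g \<sigma> 0 = [{A0}]"
| "alice_play A0 g \<sigma> (Suc n) = alice_play A0 g \<sigma> n @ [g n ` \<sigma> (alice_play A0 g \<sigma> n)]"

lemma map_last_alice_play:
  "map (\<lambda>k. last (alice_play A0 g \<sigma> k)) [0..<Suc n] = alice_play A0 g \<sigma> n"
  by (induction n) simp_all

lemma outcome_alice_play:
  "outcome \<sigma> (\<lambda>k. last (alice_play A0 g \<sigma> k)) = (\<Inter>n. \<Union>(\<sigma> (alice_play A0 g \<sigma> n)))"
  unfolding outcome_def map_last_alice_play ..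

lemma legal_pos_snoc:
  assumes "legal_pos \<sigma> ps" "alice_answer (\<sigma> ps) As"
  shows "legal_pos \<sigma> (ps @ [As])"
  unfolding legal_pos_def
proof (intro conjI allI impI)
  show "ps @ [As] \<noteq> []" by simp
  show "\<exists>A0. open A0 \<and> A0 \<noteq> {} \<and> (ps @ [As]) ! 0 = {A0}"
    using assms(1) unfolding legal_pos_def by (auto simp: nth_append)
  fix k assume k: "Suc k < length (ps @ [As])"
  show "alice_answer (\<sigma> (take (Suc k) (ps @ [As]))) ((ps @ [As]) ! Suc k)"
  proof (cases "Suc k < length ps")
    case True
    then show ?thesis using assms(1) unfolding legal_pos_def by (simp add: nth_append)
  next
    case False
    then have "Suc k = length ps" using k by simp
    then show ?thesis using assms(2) by simp
  qed
qed

lemma basis_element_closure_subset_Diff: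
  fixes W C :: "'a::metric_space set"
  assumes \<B>: "topological_basis \<B>" and W: "open W" "W \<noteq> {}"
    and C: "closed C" "interior C = {}"
  obtains A where "A \<in> \<B>" "A \<noteq> {}" "closure A \<subseteq> W - C"
proof -
  have "\<not> W \<subseteq> C"
    using W C interior_maximal by blast
  then obtain y where y: "y \<in> W - C" by blast
  moreover have "open (W - C)" using W C by (simp add: open_Diff)
  ultimately obtain e where e: "e > 0" "ball y e \<subseteq> W - C"
    using open_contains_ball by blast
  obtain A where A: "A \<in> \<B>" "y \<in> A" "A \<subseteq> ball y (e/2)"
    using topological_basisE[OF \<B>, of "ball y (e/2)" y] e by auto
  have "closure A \<subseteq> cball y (e/2)"
    using A by (meson ball_subset_cball closed_cball closure_minimal order_trans)
  also have "\<dots> \<subseteq> ball y e" using e by (auto simp: subset_iff)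
  finally show thesis using that A e by blast
qed

lemma
  fixes U C :: "nat \<Rightarrow> 'a::topological_space set"
  assumes shrinking: "\<And>n. closure (U (Suc n)) \<subseteq> U n - C n"
  shows closed_Inter_shrinking: "closed (\<Inter>n. U n)"
    and Inter_shrinking_disjoint: "(\<Inter>n. U n) \<inter> C n = {}"
proof -
  have Inter_eq: "(\<Inter>n. U n) = (\<Inter>n. closure (U (Suc n)))"
    using shrinking closure_subset by blast
  show "closed (\<Inter>n. U n)"
    unfolding Inter_eq by auto
  show "(\<Inter>n. U n) \<inter> C n = {}"
    unfolding Inter_eq using shrinking[of n] by blast
qed

lemma interior_empty_if_disjoint_Rats:
  fixes S :: "real set"
  assumes "S \<inter> \<rat> = {}"
  shows "interior S = {}"
proof -
  have "interior S \<inter> \<rat> = {}"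
    using assms interior_subset by blast
  then have "interior S \<inter> closure \<rat> = {}"
    by (simp add: open_Int_closure_eq_empty)
  then show ?thesis by (simp add: Rats_closure_real)
qed

locale legal_alice_play =
  fixes \<sigma> :: "real set set list \<Rightarrow> real set set" and A0 :: "real set"
    and g :: "nat \<Rightarrow> real set \<Rightarrow> real set"
  assumes strategy: "bob_strategy \<sigma>" and A0: "open A0" "A0 \<noteq> {}"
    and answer_legal: "\<And>n B. open B \<Longrightarrow> B \<noteq> {} \<Longrightarrow> open (g n B) \<and> g n B \<noteq> {} \<and> g n B \<subseteq> B"
begin

lemma legal_pos_alice_play: "legal_pos \<sigma> (alice_play A0 g \<sigma> n)"
proof (induction n)
  case 0
  then show ?case using A0 unfolding legal_pos_def by auto
next
  case (Suc n)
  have "\<forall>B\<in>\<sigma> (alice_play A0 g \<sigma> n). open B \<and> B \<noteq> {}"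
    using strategy Suc.IH unfolding bob_strategy_def by blast
  then have "alice_answer (\<sigma> (alice_play A0 g \<sigma> n)) (g n ` \<sigma> (alice_play A0 g \<sigma> n))"
    unfolding alice_answer_def by (intro exI[of _ "g n"]) (simp add: answer_legal)
  then show ?case using legal_pos_snoc[OF Suc.IH] by simp
qed

lemma bob_move_alice_play:
  "finite (\<sigma> (alice_play A0 g \<sigma> n))"
  "B \<in> \<sigma> (alice_play A0 g \<sigma> n) \<Longrightarrow> open B \<and> B \<noteq> {} \<and> B \<subseteq> \<Union>(last (alice_play A0 g \<sigma> n))"
  using strategy legal_pos_alice_play[of n] unfolding bob_strategy_def by blast+

lemma compatible_alice_play: "compatible \<sigma> (\<lambda>k. last (alice_play A0 g \<sigma> k))"
  unfolding compatible_def map_last_alice_play using legal_pos_alice_play ..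

lemma closure_Union_bob_move_alice_play_Suc:
  "closure (\<Union>(\<sigma> (alice_play A0 g \<sigma> (Suc n))))
     \<subseteq> (\<Union>B\<in>\<sigma> (alice_play A0 g \<sigma> n). closure (g n B))"
proof -
  have "closure (\<Union>(\<sigma> (alice_play A0 g \<sigma> (Suc n))))
      \<subseteq> closure (\<Union>B\<in>\<sigma> (alice_play A0 g \<sigma> n). g n B)"
    using bob_move_alice_play(2)[of _ "Suc n"] by (intro closure_mono) auto
  also have "\<dots> \<subseteq> (\<Union>B\<in>\<sigma> (alice_play A0 g \<sigma> n). closure (g n B))"
    using bob_move_alice_play(1) closure_subset by (intro closure_minimal closed_Union) auto
  finally show ?thesis .
qed

end

lemma alice_play_avoiding_closed_sets:
  fixes \<B> :: "real set set" and C :: "nat \<Rightarrow> real set"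
  assumes \<B>: "topological_basis \<B>" and \<sigma>: "bob_strategy \<sigma>"
    and C: "\<And>n. closed (C n)" "\<And>n. interior (C n) = {}"
  shows "\<exists>s. (\<forall>n. finite (s n) \<and> s n \<subseteq> \<B>) \<and> compatible \<sigma> s \<and>
    closed (outcome \<sigma> s) \<and> (\<forall>n. outcome \<sigma> s \<inter> C n = {})"
proof -
  have avoiding_basic: "\<exists>A. A \<in> \<B> \<and> A \<noteq> {} \<and> closure A \<subseteq> B - C n"
    if "open B" "B \<noteq> {}" for n B
    using basis_element_closure_subset_Diff[OF \<B> that C] by blast
  define g where "g n B = (SOME A. A \<in> \<B> \<and> A \<noteq> {} \<and> closure A \<subseteq> B - C n)" for n B
  have g: "g n B \<in> \<B>" "g n B \<noteq> {}" "closure (g n B) \<subseteq> B - C n"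
    if "open B" "B \<noteq> {}" for n B
    using someI_ex[OF avoiding_basic[OF that]] unfolding g_def by auto
  have g_legal: "open (g n B) \<and> g n B \<noteq> {} \<and> g n B \<subseteq> B" if "open B" "B \<noteq> {}" for n B
    using g[OF that, where n = n] topological_basis_open[OF \<B>] closure_subset[of "g n B"] by auto
  obtain A0 where A0_basic: "A0 \<in> \<B>" "0 \<in> A0"
    using topological_basisE[OF \<B>, of UNIV 0] by auto
  then have "open A0" "A0 \<noteq> {}" using \<B> topological_basis_open by auto
  then interpret legal_alice_play \<sigma> A0 g
    using \<sigma> g_legal by unfold_locales
  define U where "U n = \<Union>(\<sigma> (alice_play A0 g \<sigma> n))" for n
  have shrinking: "closure (U (Suc n)) \<subseteq> U n - C n" for n
  proof -
    have "closure (g n B) \<subseteq> U n - C n" if "B \<in> \<sigma> (alice_play A0 g \<sigma> n)" for B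
      using g(3)[where n = n and B = B] bob_move_alice_play(2)[OF that] that
      unfolding U_def by blast
    then show ?thesis
      using closure_Union_bob_move_alice_play_Suc[of n] unfolding U_def by blast
  qed
  define s where "s k = last (alice_play A0 g \<sigma> k)" for k
  have "finite (s n) \<and> s n \<subseteq> \<B>" for n
    using A0_basic bob_move_alice_play g(1) by (cases n) (auto simp: s_def)
  moreover have "compatible \<sigma> s"
    unfolding s_def by (rule compatible_alice_play)
  moreover have "outcome \<sigma> s = (\<Inter>n. U n)"
    unfolding s_def U_def by (rule outcome_alice_play)
  ultimately show ?thesis
    using closed_Inter_shrinking[of U C, OF shrinking] Inter_shrinking_disjoint[of U C, OF shrinking]
    by (intro exI[of _ s]) auto
qed

theorem lemma4p8:
  fixes \<B> :: "real set set" and \<sigma> :: "real set set list \<Rightarrow> real set set"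
    and X :: "real set" and \<Y> :: "real set set"
  assumes "countable \<B>" and "topological_basis \<B>"
    and "bob_strategy \<sigma>"
    and "countable X"
    and "countable \<Y>" and "\<forall>Y\<in>\<Y>. nowhere_dense Y"
  shows "\<exists>s. (\<forall>n. finite (s n) \<and> s n \<subseteq> \<B>) \<and> compatible \<sigma> s \<and>
    closed (outcome \<sigma> s) \<and> nowhere_dense (outcome \<sigma> s) \<and>
    outcome \<sigma> s \<inter> (X \<union> \<Union>\<Y>) = {}"
proof -
  define \<C> where "\<C> = closure ` \<Y> \<union> (\<lambda>x. {x}) ` (X \<union> \<rat>)"
  have "\<C> \<noteq> {}" using Rats_0 by (auto simp: \<C>_def)
  have "countable \<C>"
    unfolding \<C>_def using assms(4,5) countable_rat by blast
  have closed_nowhere_dense: "closed D \<and> interior D = {}" if "D \<in> \<C>" for D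
    using that assms(6) unfolding \<C>_def nowhere_dense_def by (auto simp: interior_singleton)
  define C where "C = from_nat_into \<C>"
  have C_range: "range C = \<C>"
    unfolding C_def by (rule range_from_nat_into[OF \<open>\<C> \<noteq> {}\<close> \<open>countable \<C>\<close>])
  then have "C n \<in> \<C>" for n by blast
  then have "closed (C n)" "interior (C n) = {}" for n
    using closed_nowhere_dense by blast+
  from alice_play_avoiding_closed_sets[where C = C, OF assms(2,3) this]
  obtain s where s: "\<forall>n. finite (s n) \<and> s n \<subseteq> \<B>" "compatible \<sigma> s"
      "closed (outcome \<sigma> s)" "\<forall>n. outcome \<sigma> s \<inter> C n = {}"
    by blast
  have "outcome \<sigma> s \<inter> \<Union>\<C> = {}"
    unfolding C_range[symmetric] using s(4) by blast
  moreover have "X \<union> \<rat> \<union> \<Union>\<Y> \<subseteq> \<Union>\<C>"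
    unfolding \<C>_def using closure_subset by blast
  ultimately have avoids: "outcome \<sigma> s \<inter> (X \<union> \<rat> \<union> \<Union>\<Y>) = {}"
    by blast
  then have "interior (outcome \<sigma> s) = {}"
    by (intro interior_empty_if_disjoint_Rats) blast
  then have "nowhere_dense (outcome \<sigma> s)"
    unfolding nowhere_dense_def closure_closed[OF s(3)] .
  with s avoids show ?thesis by blast
qed

end
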